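(* For $0<q<1$ and every integer $k\ge1$, \[ \frac{q^k\prod_{n=1}^{k}(q^{2n}+q^{2k})}{\prod_{n=0}^{k}(1-q^{2n+2k})} = -\,\frac{q^k\,(-q^2;q^2)_k}{(q^{2k}-1)\,(q^2;q^2)_k}\; {}_3\phi_2\!\left(\begin{matrix}-q^{2k+2},\,q^{2k},\,q^{-2k}\\ -q^2,\,q^{2k+2}\end{matrix};q^2,\,q^2\right). \]
   Context: $(a;q)_n=\prod_{i=0}^{n-1}(1-aq^i)$ with $(a;q)_0=1$. Here ${}_3\phi_2\!\left(\begin{smallmatrix}a_1,a_2,a_3\\ b_1,b_2\end{smallmatrix};p,z\right)=\sum_{i\ge0}\frac{(a_1;p)_i(a_2;p)_i(a_3;p)_i}{(b_1;p)_i(b_2;p)_i(p;p)_i}z^i$; with $a_3=q^{-2k}$ and $p=q^2$ the sum terminates at $i=k$. *)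

theory Defs
  imports Complex_Main
begin

definition qpoch :: "real \<Rightarrow> real \<Rightarrow> nat \<Rightarrow> real" where
  "qpoch a q n = (\<Prod>i<n. (1 - a * q ^ i))"

definition phi32 :: "real \<Rightarrow> real \<Rightarrow> real \<Rightarrow> real \<Rightarrow> real \<Rightarrow> real \<Rightarrow> real \<Rightarrow> real" where
  "phi32 a1 a2 a3 b1 b2 p z =
     (\<Sum>i. qpoch a1 p i * qpoch a2 p i * qpoch a3 p i
           / (qpoch b1 p i * qpoch b2 p i * qpoch p p i) * z ^ i)"

end

theory Submission
  imports Defs "HOL-Computational_Algebra.Polynomial"
begin

text \<open>Put x = q^2 and a = x^k. The left-hand side is q^k P(a) / prod_{n<=k} (1 - a x^n) for
  the polynomial P(b) = prod_{n=1..k} (x^n + b) of degree k, so Lagrange interpolation at the k + 1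
  poles b = x^-i yields a partial fraction decomposition sum_{i<=k} c_i / (1 - a x^i). Writing P(x^-i)
  and the Lagrange denominators in terms of q-Pochhammer symbols shows that c_i / (1 - a x^i) is the
  common prefactor times the i-th term of the 3phi2, which terminates at i = k because
  (x^-k; x)_i vanishes for i > k.\<close>

lemma qpoch_0 [simp]: "qpoch a x 0 = 1"
  and qpoch_Suc [simp]: "qpoch a x (Suc n) = qpoch a x n * (1 - a * x ^ n)"
  by (simp_all add: qpoch_def)

lemma qpoch_add: "qpoch a x (m + n) = qpoch a x m * qpoch (a * x ^ m) x n"
  by (induction n) (simp_all add: power_add algebra_simps)

lemma qpoch_shift: "qpoch a x n * (1 - a * x ^ n) = (1 - a) * qpoch (a * x) x n"
  using qpoch_add [of a x n 1] qpoch_add [of a x 1 n] by simp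

lemma qpoch_pos:
  assumes "0 < x" "x < 1" "\<bar>a\<bar> < 1"
  shows "0 < qpoch a x n"
  unfolding qpoch_def
proof (intro prod_pos ballI)
  fix j
  have "\<bar>a * x ^ j\<bar> \<le> \<bar>a\<bar>"
    using assms by (simp add: abs_mult mult_left_le power_le_one)
  then show "0 < 1 - a * x ^ j"
    using assms by linarith
qed

lemma qpoch_inverse_power_eq_0:
  assumes "x \<noteq> 0" "k < n"
  shows "qpoch (inverse (x ^ k)) x n = 0"
  unfolding qpoch_def using assms by (intro prod_zero bexI [of _ k]) auto

lemma phi32_terminating:
  assumes "p \<noteq> 0"
  shows "phi32 a1 a2 (inverse (p ^ k)) b1 b2 p z
       = (\<Sum>i\<le>k. qpoch a1 p i * qpoch a2 p i * qpoch (inverse (p ^ k)) p i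
                   / (qpoch b1 p i * qpoch b2 p i * qpoch p p i) * z ^ i)"
  unfolding phi32_def
  by (rule suminf_finite) (use assms qpoch_inverse_power_eq_0 in auto)

lemma power_inj_on_less_1:
  fixes x :: real
  assumes "0 < x" "x < 1"
  shows "inj_on (\<lambda>n. x ^ n) A"
  by (rule inj_onI) (metis assms linorder_neq_iff power_strict_decreasing_iff)

lemma degree_prod_linear_le: "degree (\<Prod>n\<in>A. [:a n, b n:]) \<le> card A"
proof (cases "finite A")
  case True
  then have "degree (\<Prod>n\<in>A. [:a n, b n:]) \<le> (\<Sum>n\<in>A. degree [:a n, b n:])"
    using degree_prod_sum_le [of A "\<lambda>n. [:a n, b n:]"] by (simp add: o_def)
  also have "\<dots> \<le> (\<Sum>n\<in>A. 1)"
    by (rule sum_mono) simp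
  finally show ?thesis
    by simp
qed simp

lemma lagrange_interpolation_prod:
  fixes u :: "nat \<Rightarrow> 'a::field" and p :: "'a poly"
  assumes inj: "inj_on u {..k}" and nz: "\<And>n. n \<le> k \<Longrightarrow> u n \<noteq> 0" and deg: "degree p \<le> k"
  shows "poly p b = (\<Sum>i\<le>k. poly p (inverse (u i)) / (\<Prod>n\<in>{..k}-{i}. 1 - inverse (u i) * u n)
                               * (\<Prod>n\<in>{..k}-{i}. 1 - b * u n))"
proof -
  define L where "L i = (\<Prod>n\<in>{..k}-{i}. [:1, - u n:])" for i
  define r where "r = (\<Sum>i\<le>k. smult (poly p (inverse (u i)) / poly (L i) (inverse (u i))) (L i))"
  have poly_L: "poly (L i) b = (\<Prod>n\<in>{..k}-{i}. 1 - b * u n)" for i b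
    by (simp add: L_def poly_prod algebra_simps)
  have L_node: "poly (L i) (inverse (u j)) = 0 \<longleftrightarrow> i \<noteq> j" if "i \<le> k" "j \<le> k" for i j
  proof -
    have "inverse (u j) * u n = 1 \<longleftrightarrow> n = j" if "n \<le> k" for n
      using inj nz \<open>j \<le> k\<close> that by (auto simp: field_simps inj_on_def)
    then show ?thesis
      unfolding poly_L using that by auto
  qed
  have "degree (L i) \<le> k" if "i \<le> k" for i
    using degree_prod_linear_le [of "\<lambda>_. 1" "\<lambda>n. - u n" "{..k}-{i}"] that by (simp add: L_def)
  then have deg_r: "degree r \<le> k"
    unfolding r_def by (intro degree_sum_le) (auto intro: order.trans [OF degree_smult_le])
  have "p = r"
  proof (rule poly_eqI_degree [of "(\<lambda>n. inverse (u n)) ` {..k}"])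
    fix y assume "y \<in> (\<lambda>n. inverse (u n)) ` {..k}"
    then obtain j where j: "j \<le> k" "y = inverse (u j)" by auto
    have "poly r y = (\<Sum>i\<le>k. if i = j then poly p y else 0)"
      unfolding r_def poly_sum poly_smult using j L_node
      by (intro sum.cong) (auto simp: poly_L nz)
    then show "poly p y = poly r y"
      using j by simp
  next
    have "card ((\<lambda>n. inverse (u n)) ` {..k}) = Suc k"
      using inj by (simp add: card_image inj_on_def)
    then show "degree p < card ((\<lambda>n. inverse (u n)) ` {..k})"
      and "degree r < card ((\<lambda>n. inverse (u n)) ` {..k})"
      using deg deg_r by simp_all
  qed
  then have "poly p b = poly r b"
    by simp
  then show ?thesis
    by (simp add: r_def poly_sum poly_L)
qed

lemma partial_fractions_prod:
  fixes u :: "nat \<Rightarrow> 'a::field" and p :: "'a poly"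
  assumes "inj_on u {..k}" "\<And>n. n \<le> k \<Longrightarrow> u n \<noteq> 0" "degree p \<le> k"
    and pole: "\<And>n. n \<le> k \<Longrightarrow> b * u n \<noteq> 1"
  shows "poly p b / (\<Prod>n\<le>k. 1 - b * u n)
       = (\<Sum>i\<le>k. poly p (inverse (u i)) / (\<Prod>n\<in>{..k}-{i}. 1 - inverse (u i) * u n) / (1 - b * u i))"
proof -
  have "poly p b = (\<Sum>i\<le>k. poly p (inverse (u i)) / (\<Prod>n\<in>{..k}-{i}. 1 - inverse (u i) * u n)
                               * (\<Prod>n\<in>{..k}-{i}. 1 - b * u n))"
    using assms(1-3) by (rule lagrange_interpolation_prod)
  moreover have "(\<Prod>n\<le>k. 1 - b * u n) = (1 - b * u i) * (\<Prod>n\<in>{..k}-{i}. 1 - b * u n)"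
    and "(\<Prod>n\<in>{..k}-{i}. 1 - b * u n) \<noteq> 0" if "i \<le> k" for i
    using that pole by (auto simp: prod.remove)
  ultimately show ?thesis
    by (simp add: sum_divide_distrib)
qed

lemma prod_power_plus_inverse_power:
  fixes x :: real
  assumes "x \<noteq> 0"
  shows "(\<Prod>n=1..k. x ^ n + inverse (x ^ i)) * x ^ (i * k) = qpoch (- (x ^ (i + 1))) x k"
proof (induction k)
  case (Suc k)
  have "(x ^ Suc k + inverse (x ^ i)) * x ^ i = 1 + x ^ (i + 1) * x ^ k"
    using assms by (simp add: field_simps power_add)
  then show ?case
    using Suc by (simp add: prod.nat_ivl_Suc' power_add algebra_simps)
qed simp

text \<open>The triangular power prod_{m<i} x^(m+1) = x^(i(i+1)/2) occurring here and in the next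
  lemma cancels once the two are combined.\<close>

lemma qpoch_inverse_power:
  fixes x :: real
  assumes "x \<noteq> 0" "i \<le> k"
  shows "qpoch (inverse (x ^ k)) x i * x ^ (i * k + i) * qpoch x x (k - i)
       = (-1) ^ i * qpoch x x k * (\<Prod>m<i. x ^ Suc m)"
  using assms(2)
proof (induction i)
  case (Suc i)
  then obtain d where d: "k = Suc i + d"
    using le_Suc_ex by blast
  define Q where "Q = qpoch (inverse (x ^ k)) x i * x ^ (i * k + i)"
  have factor: "(1 - inverse (x ^ k) * x ^ i) * x ^ k = - (x ^ i * (1 - x * x ^ d))"
    using assms(1) by (simp add: d field_simps power_add)
  have "qpoch (inverse (x ^ k)) x (Suc i) * x ^ (Suc i * k + Suc i) * qpoch x x (k - Suc i)
      = Q * qpoch x x d * x * ((1 - inverse (x ^ k) * x ^ i) * x ^ k)"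
    by (simp add: Q_def d power_add mult_ac)
  also have "\<dots> = (Q * qpoch x x (k - i)) * (- (x ^ Suc i))"
    unfolding factor by (simp add: d Suc_diff_le mult_ac)
  finally show ?case
    using Suc by (simp add: Q_def algebra_simps)
qed simp

lemma lagrange_denominator_power:
  fixes x :: real
  assumes "x \<noteq> 0" "i \<le> k"
  shows "(\<Prod>n\<in>{..k}-{i}. 1 - inverse (x ^ i) * x ^ n) * (\<Prod>m<i. x ^ Suc m)
       = (-1) ^ i * qpoch x x i * qpoch x x (k - i)"
proof -
  have split: "{..k}-{i} = {..<i} \<union> {i<..k}"
    using assms by auto
  have "(\<Prod>n<i. 1 - inverse (x ^ i) * x ^ n) = (\<Prod>m<i. 1 - inverse (x ^ i) * x ^ (i - Suc m))"
    by (rule prod.reindex_bij_witness [where i="\<lambda>m. i - Suc m" and j="\<lambda>m. i - Suc m"]) auto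
  also have "\<dots> = (\<Prod>m<i. 1 - inverse (x ^ Suc m))"
  proof (rule prod.cong)
    fix m assume "m \<in> {..<i}"
    then have "x ^ i = x ^ (i - Suc m) * x ^ Suc m"
      by (simp flip: power_add del: power_Suc)
    then show "1 - inverse (x ^ i) * x ^ (i - Suc m) = 1 - inverse (x ^ Suc m)"
      using assms by (simp add: field_simps)
  qed simp
  finally have "(\<Prod>n<i. 1 - inverse (x ^ i) * x ^ n) * (\<Prod>m<i. x ^ Suc m)
      = (\<Prod>m<i. (1 - inverse (x ^ Suc m)) * x ^ Suc m)"
    by (simp add: prod.distrib)
  also have "\<dots> = (\<Prod>m<i. - 1 * (1 - x * x ^ m))"
    using assms by (intro prod.cong) (simp_all add: field_simps)
  also have "\<dots> = (-1) ^ i * qpoch x x i"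
    unfolding prod.distrib qpoch_def by simp
  finally have low: "(\<Prod>n<i. 1 - inverse (x ^ i) * x ^ n) * (\<Prod>m<i. x ^ Suc m) = (-1) ^ i * qpoch x x i" .
  have high: "qpoch x x (k - i) = (\<Prod>n\<in>{i<..k}. 1 - inverse (x ^ i) * x ^ n)"
    unfolding qpoch_def
    by (rule prod.reindex_bij_witness [where i="\<lambda>n. n - Suc i" and j="\<lambda>m. m + Suc i"])
       (use assms in \<open>auto simp: field_simps power_add\<close>)
  have "(\<Prod>n\<in>{..k}-{i}. 1 - inverse (x ^ i) * x ^ n)
      = (\<Prod>n<i. 1 - inverse (x ^ i) * x ^ n) * (\<Prod>n\<in>{i<..k}. 1 - inverse (x ^ i) * x ^ n)"
    unfolding split by (rule prod.union_disjoint) auto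
  then show ?thesis
    by (simp only: high flip: low) (simp only: ac_simps)
qed

lemma qpoch_inverse_power_lagrange_denominator:
  fixes x :: real
  assumes "0 < x" "x < 1" "i \<le> k"
  shows "qpoch (inverse (x ^ k)) x i * x ^ (i * k + i) * (\<Prod>n\<in>{..k}-{i}. 1 - inverse (x ^ i) * x ^ n)
       = qpoch x x k * qpoch x x i"
proof -
  define T where "T = (\<Prod>m<i. x ^ Suc m)"
  have "0 < qpoch x x (k - i)"
    by (rule qpoch_pos) (use assms in auto)
  then have nz: "T * qpoch x x (k - i) \<noteq> 0"
    using assms by (simp add: T_def)
  have "(qpoch (inverse (x ^ k)) x i * x ^ (i * k + i) * (\<Prod>n\<in>{..k}-{i}. 1 - inverse (x ^ i) * x ^ n))
        * (T * qpoch x x (k - i))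
      = (qpoch (inverse (x ^ k)) x i * x ^ (i * k + i) * qpoch x x (k - i))
        * ((\<Prod>n\<in>{..k}-{i}. 1 - inverse (x ^ i) * x ^ n) * T)"
    by (simp only: ac_simps)
  also have "\<dots> = ((-1) ^ i * (-1) ^ i) * (qpoch x x k * qpoch x x i) * (T * qpoch x x (k - i))"
    using qpoch_inverse_power [of x i k] lagrange_denominator_power [of x i k] assms unfolding T_def
    by (simp only: less_imp_neq not_sym ac_simps)
  finally show ?thesis
    using nz by (simp flip: power_add)
qed

lemma partial_fraction_coefficient:
  fixes x :: real
  assumes x: "0 < x" "x < 1" and "0 < k" "i \<le> k"
  shows "(\<Prod>n=1..k. x ^ n + inverse (x ^ i)) / (\<Prod>n\<in>{..k}-{i}. 1 - inverse (x ^ i) * x ^ n)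
           / (1 - x ^ k * x ^ i)
       = qpoch (- x) x k / ((1 - x ^ k) * qpoch x x k)
         * (qpoch (- (x ^ k * x)) x i * qpoch (x ^ k) x i * qpoch (inverse (x ^ k)) x i
            / (qpoch (- x) x i * qpoch (x ^ k * x) x i * qpoch x x i) * x ^ i)"
proof -
  have "x ^ k < 1" "x ^ k * x ^ i < 1" "x ^ k * x < 1"
    using assms power_less_one_iff [of x "k + i"] power_less_one_iff [of x "Suc k"]
    by (simp_all add: power_less_one_iff power_add mult.commute)
  then have pos: "0 < qpoch x x k" "0 < qpoch x x i" "0 < qpoch (- x) x k" "0 < qpoch (- x) x i"
    "0 < qpoch (x ^ k * x) x i"
    using x by (auto intro!: qpoch_pos)
  note node_eq = qpoch_inverse_power_lagrange_denominator [OF assms(1,2,4)]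
  then have "qpoch (inverse (x ^ k)) x i \<noteq> 0"
    using pos by auto
  with node_eq x have nodes: "(\<Prod>n\<in>{..k}-{i}. 1 - inverse (x ^ i) * x ^ n)
      = qpoch x x k * qpoch x x i / (qpoch (inverse (x ^ k)) x i * x ^ (i * k + i))"
    by (simp add: field_simps)
  have "qpoch (- x) x k * qpoch (- (x ^ k * x)) x i = qpoch (- x) x i * qpoch (- (x ^ (i + 1))) x k"
    using qpoch_add [of "- x" x k i] qpoch_add [of "- x" x i k] by (simp add: add.commute mult.commute)
  then have upper: "qpoch (- (x ^ k * x)) x i = qpoch (- x) x i * qpoch (- (x ^ (i + 1))) x k / qpoch (- x) x k"
    using pos by (simp add: field_simps)
  have "qpoch (x ^ k) x i * (1 - x ^ k * x ^ i) = (1 - x ^ k) * qpoch (x ^ k * x) x i"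
    by (rule qpoch_shift)
  then have lower: "qpoch (x ^ k) x i = (1 - x ^ k) * qpoch (x ^ k * x) x i / (1 - x ^ k * x ^ i)"
    using \<open>x ^ k * x ^ i < 1\<close> by (simp add: field_simps)
  have "(\<Prod>n=1..k. x ^ n + inverse (x ^ i)) * x ^ (i * k) = qpoch (- (x ^ (i + 1))) x k"
    using x by (intro prod_power_plus_inverse_power) simp
  then have numerator: "(\<Prod>n=1..k. x ^ n + inverse (x ^ i)) = qpoch (- (x ^ (i + 1))) x k / x ^ (i * k)"
    using x by (simp add: field_simps)
  show ?thesis
    unfolding numerator nodes upper lower
    using pos x \<open>x ^ k < 1\<close> \<open>x ^ k * x ^ i < 1\<close> \<open>qpoch (inverse (x ^ k)) x i \<noteq> 0\<close>
    by (simp add: divide_simps power_add)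
qed

lemma partial_fractions_phi32:
  fixes x :: real
  assumes x: "0 < x" "x < 1" and "0 < k"
  shows "(\<Prod>n=1..k. x ^ n + x ^ k) / (\<Prod>n\<le>k. 1 - x ^ k * x ^ n)
       = qpoch (- x) x k / ((1 - x ^ k) * qpoch x x k)
         * phi32 (- (x ^ k * x)) (x ^ k) (inverse (x ^ k)) (- x) (x ^ k * x) x x"
proof -
  define P where "P = (\<Prod>n\<in>{1..k}. [:x ^ n, 1:])"
  have poly_P: "poly P y = (\<Prod>n=1..k. x ^ n + y)" for y
    by (simp add: P_def poly_prod)
  have "degree P \<le> k"
    using degree_prod_linear_le [of "\<lambda>n. x ^ n" "\<lambda>_. 1" "{1..k}"] by (simp add: P_def)
  moreover have "x ^ k * x ^ n \<noteq> 1" for n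
    using assms power_less_one_iff [of x "k + n"] by (simp flip: power_add)
  ultimately have "poly P (x ^ k) / (\<Prod>n\<le>k. 1 - x ^ k * x ^ n)
      = (\<Sum>i\<le>k. poly P (inverse (x ^ i)) / (\<Prod>n\<in>{..k}-{i}. 1 - inverse (x ^ i) * x ^ n)
                   / (1 - x ^ k * x ^ i))"
    using x by (intro partial_fractions_prod power_inj_on_less_1) auto
  also have "\<dots> = (\<Sum>i\<le>k. qpoch (- x) x k / ((1 - x ^ k) * qpoch x x k)
      * (qpoch (- (x ^ k * x)) x i * qpoch (x ^ k) x i * qpoch (inverse (x ^ k)) x i
         / (qpoch (- x) x i * qpoch (x ^ k * x) x i * qpoch x x i) * x ^ i))"
    unfolding poly_P using assms by (intro sum.cong refl partial_fraction_coefficient) auto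
  also have "\<dots> = qpoch (- x) x k / ((1 - x ^ k) * qpoch x x k)
      * phi32 (- (x ^ k * x)) (x ^ k) (inverse (x ^ k)) (- x) (x ^ k * x) x x"
    using x by (simp add: phi32_terminating sum_distrib_left)
  finally show ?thesis
    unfolding poly_P .
qed

theorem mainTheorem2:
  fixes q :: real and k :: nat
  assumes "0 < q" "q < 1" "1 \<le> k"
  shows "q ^ k * (\<Prod>n=1..k. (q ^ (2*n) + q ^ (2*k))) / (\<Prod>n=0..k. (1 - q ^ (2*n + 2*k)))
       = - (q ^ k * qpoch (- (q^2)) (q^2) k / ((q ^ (2*k) - 1) * qpoch (q^2) (q^2) k))
         * phi32 (- (q ^ (2*k+2))) (q ^ (2*k)) (inverse (q ^ (2*k))) (- (q^2)) (q ^ (2*k+2)) (q^2) (q^2)"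
proof -
  define x where "x = q ^ 2"
  have "0 < x" "x < 1"
    using assms by (simp_all add: x_def power_less_one_iff)
  then have identity: "(\<Prod>n=1..k. x ^ n + x ^ k) / (\<Prod>n\<le>k. 1 - x ^ k * x ^ n)
      = qpoch (- x) x k / ((1 - x ^ k) * qpoch x x k)
        * phi32 (- (x ^ k * x)) (x ^ k) (inverse (x ^ k)) (- x) (x ^ k * x) x x"
    using assms by (intro partial_fractions_phi32) auto
  have even_power: "q ^ (2 * n) = x ^ n" for n
    by (simp add: x_def power_mult)
  have powers: "q ^ (2 * n + 2 * k) = x ^ k * x ^ n" "q ^ (2 * k + 2) = x ^ k * x" for n
    by (simp_all only: power_add even_power mult.commute [of "x ^ n"] flip: x_def)
  have "x ^ k - 1 = - (1 - x ^ k)"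
    by simp
  then have prefactor: "- (q ^ k * qpoch (- x) x k / ((x ^ k - 1) * qpoch x x k))
      = q ^ k * (qpoch (- x) x k / ((1 - x ^ k) * qpoch x x k))"
    by (simp only: mult_minus_left divide_minus_right minus_minus times_divide_eq_right)
  show ?thesis
    unfolding even_power powers x_def [symmetric] atLeast0AtMost prefactor
    using identity by (metis mult.assoc times_divide_eq_right)
qed

end
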